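(* Let $H, Q, R, B, D\in\mathbb{R}^{n\times n}$ be symmetric matrices, let $\beta>0$, $\lambda>0$, $r>0$ with $\beta(\lambda+r)<4$. Let $Z^{\ast}$ be the unique minimizer of $$P \mapsto \operatorname{tr}(HP) + \frac{1}{\beta}\operatorname{tr}\bigl\{P\ln P + (I-P)\ln(I-P)\bigr\} + \frac{\lambda}{2}\|P-Q+B\|_F^2 + \frac{r}{2}\|P-R+D\|_F^2$$ over symmetric $P$ with $0\preceq P\preceq I$. Starting from any symmetric $Z^0\in\mathbb{R}^{n\times n}$, define for $l\ge 0$ $$Y^l = H + \lambda(Z^l - Q + B) + r(Z^l - R + D), \qquad Z^{l+1} = \bigl(I+\exp(\beta Y^l)\bigr)^{-1}.$$ Then for all $l\ge 0$, $$\|Z^l - Z^{\ast}\|_F \le \Bigl(\frac{\beta(\lambda+r)}{4}\Bigr)^l \|Z^0 - Z^{\ast}\|_F,$$ so $Z^l\to Z^\ast$ exponentially fast.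
   Context: Matrix functions ($\ln$, $\exp$, inverse of $I+\exp(\cdot)$) of symmetric matrices are defined by spectral calculus, with $0\ln 0 = 0$. For symmetric matrices, $A\preceq B$ means $B-A$ is positive semidefinite. $\|\cdot\|_F$ is the Frobenius norm. *)

theory Defs
  imports "HOL-Analysis.Analysis"
begin

type_synonym 'n sqmat = "real^'n^'n"

definition symmetric_mat :: "'n::finite sqmat \<Rightarrow> bool" where
  "symmetric_mat A \<longleftrightarrow> transpose A = A"

definition diag_mat :: "(real^'n::finite) \<Rightarrow> 'n sqmat" where
  "diag_mat d = (\<chi> i j. if i = j then d $ i else 0)"

definition matfun :: "(real \<Rightarrow> real) \<Rightarrow> 'n::finite sqmat \<Rightarrow> 'n sqmat" where
  "matfun f A = (THE M. \<exists>U d. orthogonal_matrix U \<and>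
      A = U ** diag_mat d ** transpose U \<and>
      M = U ** diag_mat (\<chi> i. f (d $ i)) ** transpose U)"

definition psd :: "'n::finite sqmat \<Rightarrow> bool" where
  "psd A \<longleftrightarrow> symmetric_mat A \<and> (\<forall>x. 0 \<le> x \<bullet> (A *v x))"

definition loewner_le :: "'n::finite sqmat \<Rightarrow> 'n sqmat \<Rightarrow> bool" where
  "loewner_le A B \<longleftrightarrow> psd (B - A)"

definition frob_norm :: "'n::finite sqmat \<Rightarrow> real" where
  "frob_norm A = sqrt (\<Sum>i\<in>UNIV. \<Sum>j\<in>UNIV. (A $ i $ j)^2)"

text \<open>x ln x with the convention 0 ln 0 = 0 (in Isabelle ln 0 = 0 anyway).\<close>
definition xlnx :: "real \<Rightarrow> real" where
  "xlnx x = (if x = 0 then 0 else x * ln x)"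

definition objective ::
  "'n::finite sqmat \<Rightarrow> 'n sqmat \<Rightarrow> 'n sqmat \<Rightarrow> 'n sqmat \<Rightarrow> 'n sqmat \<Rightarrow>
   real \<Rightarrow> real \<Rightarrow> real \<Rightarrow> 'n sqmat \<Rightarrow> real" where
  "objective H Q R B D \<beta> lam r P =
     trace (H ** P)
     + (1 / \<beta>) * trace (matfun xlnx P + matfun xlnx (mat 1 - P))
     + (lam / 2) * (frob_norm (P - Q + B))^2
     + (r / 2) * (frob_norm (P - R + D))^2"

definition feasible :: "'n::finite sqmat \<Rightarrow> bool" where
  "feasible P \<longleftrightarrow> symmetric_mat P \<and> loewner_le 0 P \<and> loewner_le P (mat 1)"

end

theory Submission
  imports Defs
begin

text \<open>The iteration is \<open>Z \<mapsto> \<sigma>(G Z)\<close>, where \<open>G Z = H + \<lambda>(Z - Q + B) + r(Z - R + D)\<close> is affine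
  with slope \<open>\<lambda> + r\<close> and \<open>\<sigma> y = 1 / (1 + exp (\<beta> y))\<close> is a scalar function with Lipschitz
  constant \<open>\<beta>/4\<close>.  A scalar \<open>L\<close>-Lipschitz function induces an \<open>L\<close>-Lipschitz matrix function on
  symmetric matrices in the Frobenius norm, so the iteration map is a contraction with constant
  \<open>\<beta>(\<lambda> + r)/4 < 1\<close> and has a fixed point \<open>P\<^sub>0\<close>.  This fixed point is feasible, and it is the
  minimizer: the quadratic part of the objective lies above its tangent, and the tangent-line
  inequality for the convex function \<open>x ln x + (1 - x) ln (1 - x)\<close>, whose derivative \<open>logit\<close>
  inverts \<open>\<sigma>\<close>, lifts to matrices by Klein's trace inequality.  Uniqueness of the minimizer gives
  \<open>Z\<^sup>* = P\<^sub>0\<close>, and the contraction estimate iterates.\<close>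

section \<open>Matrix algebra\<close>

lemma matrix_add_rdistrib: "((A::'a::semiring_1^'n^'m) + B) ** C = A ** C + B ** C"
  by (simp add: vec_eq_iff matrix_matrix_mult_def distrib_right sum.distrib)

lemma matrix_mul_diff_left: "(A::'a::ring_1^'n^'m) ** (B - C) = A ** B - A ** C"
  by (simp add: vec_eq_iff matrix_matrix_mult_def sum_subtractf right_diff_distrib)

lemma matrix_mul_diff_right: "((A::'a::ring_1^'n^'m) - B) ** C = A ** C - B ** C"
  by (simp add: vec_eq_iff matrix_matrix_mult_def sum_subtractf left_diff_distrib)

lemma trace_scaleR: "trace (c *\<^sub>R (M::real^'n::finite^'n)) = c * trace M"
  by (simp add: trace_def sum_distrib_left)

lemma symmetric_mat_add: "symmetric_mat A \<Longrightarrow> symmetric_mat B \<Longrightarrow> symmetric_mat ((A::real^'n::finite^'n) + B)"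
  by (simp add: symmetric_mat_def transpose_def vec_eq_iff)

lemma symmetric_mat_diff: "symmetric_mat A \<Longrightarrow> symmetric_mat B \<Longrightarrow> symmetric_mat ((A::real^'n::finite^'n) - B)"
  by (simp add: symmetric_mat_def transpose_def vec_eq_iff)

lemma symmetric_mat_scaleR: "symmetric_mat A \<Longrightarrow> symmetric_mat (c *\<^sub>R (A::real^'n::finite^'n))"
  by (simp add: symmetric_mat_def transpose_scalar)

lemma complete_symmetric_mat: "complete {A :: real^'n::finite^'n. symmetric_mat A}"
proof -
  have "subspace {A :: real^'n^'n. symmetric_mat A}"
    by (auto simp: subspace_def symmetric_mat_add symmetric_mat_scaleR)
      (simp add: symmetric_mat_def transpose_def vec_eq_iff)
  then show ?thesis by (simp add: complete_eq_closed closed_subspace)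
qed

lemma symmetric_mat_inner_commute:
  "symmetric_mat A \<Longrightarrow> (A *v x) \<bullet> y = x \<bullet> ((A::real^'n::finite^'n) *v y)"
  by (metis dot_lmul_matrix vector_transpose_matrix symmetric_mat_def)

lemma norm_squared_mat: "(norm (A::real^'n::finite^'m::finite))^2 = (\<Sum>i\<in>UNIV. \<Sum>j\<in>UNIV. (A$i$j)^2)"
  by (simp add: norm_vec_def L2_set_def sum_nonneg)

lemma frob_norm_eq_norm: "frob_norm A = norm A"
  unfolding frob_norm_def by (simp add: norm_squared_mat[symmetric])

lemma norm_squared_eq_trace: "(norm (X::real^'n::finite^'m::finite))^2 = trace (transpose X ** X)"
  unfolding norm_squared_mat trace_def
  by (simp add: matrix_matrix_mult_def transpose_def power2_eq_square) (rule sum.swap)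

lemma inner_eq_trace: "X \<bullet> C = trace (transpose C ** (X::real^'n::finite^'m::finite))"
  by (simp add: inner_vec_def trace_def matrix_matrix_mult_def transpose_def mult.commute)
    (rule sum.swap)

lemma norm_squared_ge_tangent: "(norm c)^2 + 2 * (x \<bullet> c) \<le> (norm (x + c))^2"
  for x c :: "'a::real_inner"
  by (simp add: power2_norm_eq_inner inner_add_left inner_add_right inner_commute)

lemma matrix_inv_eqI:
  fixes M N :: "real^'n::finite^'n"
  assumes MN: "M ** N = mat 1" and NM: "N ** M = mat 1"
  shows "matrix_inv M = N"
  unfolding matrix_inv_def
proof (rule some_equality)
  fix N' assume N': "M ** N' = mat 1 \<and> N' ** M = mat 1"
  have "N' = N' ** (M ** N)" using MN by simp
  also have "\<dots> = N" using N' by (simp add: matrix_mul_assoc)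
  finally show "N' = N" .
qed (use MN NM in simp)

lemma orthogonal_matrix_cancel_right:
  fixes U X :: "real^'n::finite^'n"
  assumes "orthogonal_matrix U"
  shows "X ** transpose U ** U = X" and "X ** U ** transpose U = X"
  using assms by (simp_all add: matrix_mul_assoc[symmetric] orthogonal_matrix_def)

lemma trace_orthogonal_conj:
  fixes U M :: "real^'n::finite^'n"
  assumes "orthogonal_matrix U"
  shows "trace (U ** M ** transpose U) = trace M"
proof -
  have "trace ((U ** M) ** transpose U) = trace (transpose U ** (U ** M))" by (rule trace_mul_sym)
  then show ?thesis using assms by (simp add: matrix_mul_assoc orthogonal_matrix_def)
qed

lemma norm_orthogonal_conj:
  fixes X U V :: "real^'n::finite^'n"
  assumes oU: "orthogonal_matrix U" and oV: "orthogonal_matrix V"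
  shows "norm (transpose V ** X ** U) = norm X"
proof -
  have "(norm (transpose V ** X ** U))^2 = trace (transpose U ** (transpose X ** X ** U))"
    using oV by (simp add: norm_squared_eq_trace matrix_transpose_mul matrix_mul_assoc
        orthogonal_matrix_cancel_right)
  also have "\<dots> = trace (transpose X ** X ** U ** transpose U)"
    by (rule trace_mul_sym)
  also have "\<dots> = (norm X)^2"
    using oU by (simp add: orthogonal_matrix_cancel_right norm_squared_eq_trace)
  finally show ?thesis by (simp add: power2_eq_iff_nonneg)
qed

lemma inner_orthogonal_conj:
  "x \<bullet> ((U ** M ** transpose U) *v x) = (transpose U *v x) \<bullet> (M *v (transpose U *v x))"
  for U M :: "real^'n::finite^'n"
  by (metis dot_lmul_matrix matrix_vector_mul_assoc transpose_matrix_vector)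

lemma matrix_mul_diag_mat_nth: "((M::'n::finite sqmat) ** diag_mat d) $ i $ j = M$i$j * d$j"
  by (simp add: matrix_matrix_mult_def diag_mat_def if_distrib cong: if_cong)

lemma diag_mat_mul_nth: "(diag_mat d ** (M::'n::finite sqmat)) $ i $ j = d$i * M$i$j"
proof -
  have "(\<Sum>k\<in>UNIV. (if i = k then d$i else 0) * M$k$j) = (\<Sum>k\<in>UNIV. if i = k then d$i * M$k$j else 0)"
    by (rule sum.cong) auto
  then show ?thesis by (simp add: matrix_matrix_mult_def diag_mat_def)
qed

lemma diag_mat_mult_vector_nth: "(diag_mat d *v x) $ i = d$i * x$i"
proof -
  have "(\<Sum>j\<in>UNIV. (if i = j then d$i else 0) * x$j) = (\<Sum>j\<in>UNIV. if i = j then d$i * x$j else 0)"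
    by (rule sum.cong) auto
  then show ?thesis by (simp add: matrix_vector_mult_def diag_mat_def)
qed

lemma transpose_diag_mat [simp]: "transpose (diag_mat d) = diag_mat d"
  by (simp add: transpose_def diag_mat_def vec_eq_iff)

lemma diag_mat_mul_diag_mat: "diag_mat a ** diag_mat b = diag_mat (\<chi> i. a$i * b$i)"
  by (simp add: vec_eq_iff matrix_mul_diag_mat_nth) (simp add: diag_mat_def)

lemma diag_mat_add: "diag_mat a + diag_mat b = diag_mat (\<chi> i. a$i + b$i)"
  by (simp add: vec_eq_iff diag_mat_def)

lemma scaleR_diag_mat: "c *\<^sub>R diag_mat a = diag_mat (\<chi> i. c * a$i)"
  by (simp add: vec_eq_iff diag_mat_def)

lemma diag_mat_const: "diag_mat (\<chi> i. c) = mat c"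
  by (simp add: vec_eq_iff diag_mat_def mat_def)

lemma inner_diag_mat: "z \<bullet> (diag_mat d *v z) = (\<Sum>i\<in>UNIV. d$i * (z$i)^2)"
  by (simp add: inner_vec_def diag_mat_mult_vector_nth power2_eq_square mult_ac)

lemma conj_diag_mat_mult:
  fixes U :: "real^'n::finite^'n"
  assumes "orthogonal_matrix U"
  shows "(U ** diag_mat a ** transpose U) ** (U ** diag_mat b ** transpose U)
    = U ** diag_mat (\<chi> i. a$i * b$i) ** transpose U"
  using assms by (simp add: matrix_mul_assoc orthogonal_matrix_cancel_right diag_mat_mul_diag_mat[symmetric])

lemma conj_diag_mat_add:
  "(U::real^'n::finite^'n) ** diag_mat a ** transpose U + U ** diag_mat b ** transpose U
    = U ** diag_mat (\<chi> i. a$i + b$i) ** transpose U"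
  by (simp add: diag_mat_add[symmetric] matrix_add_ldistrib matrix_add_rdistrib)

lemma conj_diag_mat_scaleR:
  "c *\<^sub>R ((U::real^'n::finite^'n) ** diag_mat a ** transpose U) = U ** diag_mat (\<chi> i. c * a$i) ** transpose U"
  by (simp add: scaleR_diag_mat[symmetric] scalar_matrix_assoc matrix_scalar_ac)

lemma conj_diag_mat_diff:
  "(U::real^'n::finite^'n) ** diag_mat a ** transpose U - U ** diag_mat b ** transpose U
    = U ** diag_mat (\<chi> i. a$i - b$i) ** transpose U"
proof -
  have "diag_mat a - diag_mat b = diag_mat (\<chi> i. a$i - b$i)" by (simp add: vec_eq_iff diag_mat_def)
  then show ?thesis by (simp flip: matrix_mul_diff_left matrix_mul_diff_right)
qed

lemma conj_diag_mat_const: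
  "orthogonal_matrix U \<Longrightarrow> (U::real^'n::finite^'n) ** diag_mat (\<chi> i. c) ** transpose U = mat c"
proof -
  assume "orthogonal_matrix U"
  moreover have "mat c = c *\<^sub>R (mat 1 :: real^'n^'n)" by (simp add: vec_eq_iff mat_def)
  ultimately show ?thesis
    by (simp add: diag_mat_const orthogonal_matrix_def matrix_scalar_ac scalar_matrix_assoc[symmetric])
qed

lemma symmetric_conj_diag_mat: "symmetric_mat ((U::real^'n::finite^'n) ** diag_mat d ** transpose U)"
  by (simp add: symmetric_mat_def matrix_transpose_mul matrix_mul_assoc)

section \<open>The spectral theorem for real symmetric matrices\<close>

lemma quadratic_nonpos_imp_linear_coeff_zero:
  fixes a c :: real
  assumes quad: "\<And>t. t > 0 \<Longrightarrow> 2*t*a + t^2 * c \<le> 0" and "a \<ge> 0"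
  shows "a = 0"
proof (rule ccontr)
  assume "a \<noteq> 0"
  with \<open>a \<ge> 0\<close> have a: "a > 0" by simp
  define t where "t = a / (\<bar>c\<bar> + 1)"
  have t: "t > 0" using a by (simp add: t_def)
  have "t * \<bar>c\<bar> \<le> a" unfolding t_def using a by (simp add: field_simps)
  moreover have "t * (-\<bar>c\<bar>) \<le> t * c" using t by (intro mult_left_mono) auto
  ultimately have lower: "t * c \<ge> -a" by simp
  have "t * (2*a + t*c) \<le> 0" using quad[OF t] by (simp add: algebra_simps power2_eq_square)
  then have "2*a + t*c \<le> 0" using t by (simp add: mult_le_0_iff)
  with lower a show False by linarith
qed

text \<open>First variation: moving the maximizer \<open>v\<close> of the Rayleigh quotient to \<open>v + t u\<close> along
  \<open>u = A v - \<mu> v\<close>, which is orthogonal to \<open>v\<close>, raises the quotient by \<open>2 t \<parallel>u\<parallel>\<^sup>2 + O(t\<^sup>2)\<close>,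
  so maximality forces \<open>u = 0\<close>.\<close>
lemma rayleigh_maximizer_eigenvector:
  fixes A :: "real^'n::finite^'n"
  assumes symA: "symmetric_mat A" and T: "subspace T" and inv: "\<And>x. x \<in> T \<Longrightarrow> A *v x \<in> T"
    and vT: "v \<in> T" and nv: "norm v = 1"
    and max: "\<And>x. x \<in> T \<Longrightarrow> norm x = 1 \<Longrightarrow> x \<bullet> (A *v x) \<le> v \<bullet> (A *v v)"
  shows "A *v v = (v \<bullet> (A *v v)) *\<^sub>R v"
proof -
  define \<mu> where "\<mu> = v \<bullet> (A *v v)"
  define u where "u = A *v v - \<mu> *\<^sub>R v"
  have vv: "v \<bullet> v = 1" using nv by (simp add: norm_eq_1)
  have hom: "x \<bullet> (A *v x) \<le> \<mu> * (norm x)^2" if "x \<in> T" for x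
  proof (cases "x = 0")
    case False
    then have "(x /\<^sub>R norm x) \<bullet> (A *v (x /\<^sub>R norm x)) \<le> \<mu>"
      using max[of "x /\<^sub>R norm x"] subspace_scale[OF T that] \<mu>_def by simp
    moreover have "(x /\<^sub>R norm x) \<bullet> (A *v (x /\<^sub>R norm x)) = (x \<bullet> (A *v x)) / (norm x)^2"
      by (simp add: matrix_vector_mult_scaleR power2_eq_square divide_inverse)
    ultimately show ?thesis using False by (simp add: divide_le_eq)
  qed simp
  have uT: "u \<in> T" unfolding u_def using inv[OF vT] vT T by (simp add: subspace_diff subspace_scale)
  have uv: "v \<bullet> u = 0" using vv by (simp add: u_def \<mu>_def inner_diff_right)
  have uAv: "u \<bullet> (A *v v) = u \<bullet> u"
    using uv by (simp add: u_def inner_diff_left inner_diff_right inner_commute)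
  have first_variation: "2*t*(u \<bullet> u) + t^2 * (u \<bullet> (A *v u) - \<mu> * (u \<bullet> u)) \<le> 0" if "t > 0" for t
  proof -
    define x where "x = v + t *\<^sub>R u"
    have "x \<in> T" unfolding x_def using vT uT T by (simp add: subspace_add subspace_scale)
    moreover have "(norm x)^2 = 1 + t^2 * (u \<bullet> u)"
      using uv vv unfolding power2_norm_eq_inner
      by (simp add: x_def inner_add_left inner_add_right inner_commute power2_eq_square)
    moreover have "v \<bullet> (A *v u) = u \<bullet> (A *v v)"
      by (metis inner_commute symmetric_mat_inner_commute[OF symA])
    then have "x \<bullet> (A *v x) = \<mu> + 2*t*(u \<bullet> u) + t^2 * (u \<bullet> (A *v u))"
      by (simp add: x_def matrix_vector_right_distrib matrix_vector_mult_scaleR inner_add_left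
          inner_add_right \<mu>_def uAv power2_eq_square algebra_simps)
    ultimately show ?thesis using hom[of x] by (simp add: algebra_simps)
  qed
  have "u \<bullet> u = 0"
    using quadratic_nonpos_imp_linear_coeff_zero[OF first_variation inner_ge_zero] by blast
  then show ?thesis by (simp add: u_def \<mu>_def)
qed

lemma symmetric_invariant_subspace_eigenvector:
  fixes A :: "real^'n::finite^'n"
  assumes symA: "symmetric_mat A" and T: "subspace T" and inv: "\<And>x. x \<in> T \<Longrightarrow> A *v x \<in> T"
    and nz: "T \<noteq> {0}"
  obtains v where "v \<in> T" "norm v = 1" "A *v v = (v \<bullet> (A *v v)) *\<^sub>R v"
proof -
  define K where "K = T \<inter> sphere 0 1"
  have "compact K" unfolding K_def using closed_subspace[OF T] by (intro closed_Int_compact) auto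
  obtain x where "x \<in> T" "x \<noteq> 0" using nz subspace_0[OF T] by blast
  then have "x /\<^sub>R norm x \<in> K" by (simp add: K_def subspace_scale[OF T])
  then have "K \<noteq> {}" by blast
  moreover have "continuous_on K (\<lambda>x. x \<bullet> (A *v x))"
    by (intro continuous_intros linear_continuous_on matrix_vector_mul_bounded_linear)
  ultimately obtain v where "v \<in> K" and "\<And>y. y \<in> K \<Longrightarrow> y \<bullet> (A *v y) \<le> v \<bullet> (A *v v)"
    using continuous_attains_sup[OF \<open>compact K\<close>] by blast
  then show ?thesis
    using that rayleigh_maximizer_eigenvector[OF symA T inv] by (auto simp: K_def)
qed

definition orthonormal_eigenvectors :: "'n::finite sqmat \<Rightarrow> (real^'n) set \<Rightarrow> bool" where
  "orthonormal_eigenvectors A S \<longleftrightarrow>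
     pairwise orthogonal S \<and> (\<forall>x\<in>S. norm x = 1 \<and> (\<exists>\<mu>. A *v x = \<mu> *\<^sub>R x))"

lemma orthonormal_eigenvectors_independent: "orthonormal_eigenvectors A S \<Longrightarrow> independent S"
  unfolding orthonormal_eigenvectors_def
  by (metis norm_zero pairwise_orthogonal_independent zero_neq_one)

lemma orthonormal_eigenvectors_extend:
  fixes A :: "real^'n::finite^'n"
  assumes symA: "symmetric_mat A" and S: "orthonormal_eigenvectors A S" and sp: "span S \<noteq> UNIV"
  obtains v where "v \<notin> S" "orthonormal_eigenvectors A (insert v S)"
proof -
  define T where "T = {y. \<forall>x\<in>S. orthogonal x y}"
  have T: "subspace T" unfolding T_def by (rule subspace_orthogonal_to_vectors)
  have inv: "A *v y \<in> T" if "y \<in> T" for y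
  proof -
    have "x \<bullet> (A *v y) = 0" if "x \<in> S" for x
    proof -
      obtain m where "A *v x = m *\<^sub>R x" using S \<open>x \<in> S\<close> by (auto simp: orthonormal_eigenvectors_def)
      then show ?thesis using \<open>y \<in> T\<close> \<open>x \<in> S\<close> symmetric_mat_inner_commute[OF symA, of x y]
        by (simp add: T_def orthogonal_def)
    qed
    then show ?thesis by (simp add: T_def orthogonal_def)
  qed
  have "span S \<subset> span UNIV" using sp by auto
  then obtain x where "x \<noteq> 0" "\<And>y. y \<in> span S \<Longrightarrow> orthogonal x y"
    by (rule orthogonal_to_subspace_exists_gen) blast
  then have "x \<in> T" "x \<noteq> 0" by (auto simp: T_def orthogonal_commute span_base)
  then obtain v where v: "v \<in> T" "norm v = 1" "A *v v = (v \<bullet> (A *v v)) *\<^sub>R v"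
    using symmetric_invariant_subspace_eigenvector[OF symA T inv] by blast
  have "v \<notin> S"
  proof
    assume "v \<in> S"
    then have "v \<bullet> v = 0" using v(1) by (simp add: T_def orthogonal_def)
    with v(2) show False by simp
  qed
  moreover have "orthonormal_eigenvectors A (insert v S)"
    using S v unfolding orthonormal_eigenvectors_def T_def pairwise_insert
    by (auto simp: orthogonal_commute)
  ultimately show ?thesis by (rule that)
qed

lemma symmetric_orthonormal_eigenbasis:
  fixes A :: "real^'n::finite^'n"
  assumes symA: "symmetric_mat A"
  obtains S where "orthonormal_eigenvectors A S" "span S = UNIV"
proof -
  have bound: "card S \<le> CARD('n)" if "orthonormal_eigenvectors A S" for S
    using independent_bound[OF orthonormal_eigenvectors_independent[OF that]] by simp
  have "orthonormal_eigenvectors A {}" by (simp add: orthonormal_eigenvectors_def)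
  then obtain S where S: "orthonormal_eigenvectors A S"
    and maxS: "\<And>S'. orthonormal_eigenvectors A S' \<Longrightarrow> card S' \<le> card S"
    using ex_has_greatest_nat[of "orthonormal_eigenvectors A" "{}" card "CARD('n) + 1"] bound
    by (metis le_imp_less_Suc Suc_eq_plus1)
  have "span S = UNIV"
  proof (rule ccontr)
    assume "span S \<noteq> UNIV"
    then obtain v where "v \<notin> S" "orthonormal_eigenvectors A (insert v S)"
      using orthonormal_eigenvectors_extend[OF symA S] by blast
    moreover have "finite S"
      using independent_bound[OF orthonormal_eigenvectors_independent[OF S]] by simp
    ultimately show False using maxS[of "insert v S"] by simp
  qed
  with S show ?thesis by (rule that)
qed

theorem spectral_decomposition:
  fixes A :: "real^'n::finite^'n"
  assumes symA: "symmetric_mat A"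
  obtains U d where "orthogonal_matrix U" "A = U ** diag_mat d ** transpose U"
proof -
  obtain S where S: "orthonormal_eigenvectors A S" and spS: "span S = UNIV"
    using symmetric_orthonormal_eigenbasis[OF symA] by blast
  have indS: "independent S" by (rule orthonormal_eigenvectors_independent[OF S])
  then have "finite S" "card S = CARD('n)"
    using dim_span_eq_card_independent[OF indS] spS independent_bound by auto
  then obtain f where f: "bij_betw f (UNIV::'n set) S"
    by (metis finite_class.finite_UNIV finite_same_card_bij)
  then have fS: "f j \<in> S" for j by (auto simp: bij_betw_def)
  have orth: "orthogonal (f i) (f j)" if "i \<noteq> j" for i j
  proof -
    have "f i \<noteq> f j" using f that by (auto simp: bij_betw_def inj_on_def)
    then show ?thesis using S fS unfolding orthonormal_eigenvectors_def pairwise_def by blast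
  qed
  define d where "d = (\<chi> j. f j \<bullet> (A *v f j))"
  have eig: "A *v f j = (d$j) *\<^sub>R f j" for j
  proof -
    obtain m where m: "A *v f j = m *\<^sub>R f j" and "norm (f j) = 1"
      using S fS unfolding orthonormal_eigenvectors_def by blast
    then have "d$j = m" by (simp add: d_def norm_eq_1)
    with m show ?thesis by simp
  qed
  define U where "U = (\<chi> i j. f j $ i)"
  have oU: "orthogonal_matrix U"
    using S fS orth unfolding orthonormal_eigenvectors_def
    by (simp add: U_def orthogonal_matrix_orthonormal_columns column_def)
  have "(A ** U) $ i $ j = (U ** diag_mat d) $ i $ j" for i j
  proof -
    have "(A ** U) $ i $ j = (A *v f j) $ i"
      by (simp add: matrix_matrix_mult_def matrix_vector_mult_def U_def)
    then show ?thesis by (simp add: eig matrix_mul_diag_mat_nth U_def)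
  qed
  then have "A ** U = U ** diag_mat d" by (simp add: vec_eq_iff)
  then have "A = U ** diag_mat d ** transpose U"
    using orthogonal_matrix_cancel_right(2)[OF oU, of A] by simp
  with oU show ?thesis by (rule that)
qed

section \<open>Functional calculus\<close>

text \<open>An entry \<open>W$i$j \<noteq> 0\<close> forces \<open>d$j = e$i\<close>, so \<open>W\<close> also intertwines any function of the
  two diagonals; this makes \<open>matfun\<close> independent of the chosen decomposition.\<close>
lemma diag_mat_intertwine:
  fixes W :: "real^'n::finite^'n"
  assumes "W ** diag_mat d = diag_mat e ** W"
  shows "W ** diag_mat (\<chi> i. f (d$i)) = diag_mat (\<chi> i. f (e$i)) ** W"
proof -
  have eq: "W$i$j * d$j = e$i * W$i$j" for i j
    using arg_cong[OF assms, of "\<lambda>M. M$i$j"] by (simp add: matrix_mul_diag_mat_nth diag_mat_mul_nth)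
  have "W$i$j * f (d$j) = f (e$i) * W$i$j" for i j
  proof (cases "W$i$j = 0")
    case False
    then have "d$j = e$i" using eq[of i j] by (simp add: mult.commute)
    then show ?thesis by simp
  qed simp
  then show ?thesis by (simp add: vec_eq_iff matrix_mul_diag_mat_nth diag_mat_mul_nth)
qed

lemma matfun_spectral:
  fixes A U :: "real^'n::finite^'n"
  assumes oU: "orthogonal_matrix U" and A: "A = U ** diag_mat d ** transpose U"
  shows "matfun f A = U ** diag_mat (\<chi> i. f (d$i)) ** transpose U"
  unfolding matfun_def
proof (rule the_equality)
  fix M assume "\<exists>V e. orthogonal_matrix V \<and> A = V ** diag_mat e ** transpose V \<and>
      M = V ** diag_mat (\<chi> i. f (e$i)) ** transpose V"
  then obtain V e where oV: "orthogonal_matrix V" and AV: "A = V ** diag_mat e ** transpose V"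
    and M: "M = V ** diag_mat (\<chi> i. f (e$i)) ** transpose V" by blast
  define W where "W = transpose V ** U"
  have "W ** diag_mat d = transpose V ** (A ** U)"
    using oU by (simp add: W_def A matrix_mul_assoc orthogonal_matrix_cancel_right)
  also have "\<dots> = diag_mat e ** W"
    using oV by (simp add: W_def AV matrix_mul_assoc orthogonal_matrix_def)
  finally have WD: "W ** diag_mat (\<chi> i. f (d$i)) = diag_mat (\<chi> i. f (e$i)) ** W"
    by (rule diag_mat_intertwine)
  have "M = V ** (diag_mat (\<chi> i. f (e$i)) ** W) ** transpose U"
    using oU by (simp add: M W_def matrix_mul_assoc orthogonal_matrix_cancel_right)
  also have "\<dots> = V ** (W ** diag_mat (\<chi> i. f (d$i))) ** transpose U"
    by (simp only: WD)
  also have "\<dots> = U ** diag_mat (\<chi> i. f (d$i)) ** transpose U"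
    using oV by (simp add: W_def matrix_mul_assoc orthogonal_matrix_def)
  finally show "M = U ** diag_mat (\<chi> i. f (d$i)) ** transpose U" .
qed (use oU A in blast)

lemma spectral_decomposition_matfun:
  fixes A :: "real^'n::finite^'n"
  assumes "symmetric_mat A"
  obtains U d where "orthogonal_matrix U" "A = U ** diag_mat d ** transpose U"
    "\<And>f. matfun f A = U ** diag_mat (\<chi> i. f (d$i)) ** transpose U"
proof -
  obtain U d where "orthogonal_matrix U" "A = U ** diag_mat d ** transpose U"
    using spectral_decomposition[OF assms] by blast
  then show ?thesis using that matfun_spectral by blast
qed

lemma symmetric_matfun:
  assumes "symmetric_mat A"
  shows "symmetric_mat (matfun f A)"
proof -
  obtain U d where "orthogonal_matrix U" "A = U ** diag_mat d ** transpose U"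
    and fA: "\<And>f. matfun f A = U ** diag_mat (\<chi> i. f (d$i)) ** transpose U"
    by (rule spectral_decomposition_matfun[OF assms]) blast
  show ?thesis by (simp add: fA symmetric_conj_diag_mat)
qed

lemma matfun_ident:
  assumes "symmetric_mat A"
  shows "matfun (\<lambda>x. x) A = A"
proof -
  obtain U d where "orthogonal_matrix U" and A: "A = U ** diag_mat d ** transpose U"
    and fA: "\<And>f. matfun f A = U ** diag_mat (\<chi> i. f (d$i)) ** transpose U"
    by (rule spectral_decomposition_matfun[OF assms]) blast
  show ?thesis by (simp add: fA A[symmetric])
qed

lemma matfun_const:
  assumes "symmetric_mat A"
  shows "matfun (\<lambda>_. c) A = mat c"
proof -
  obtain U d where oU: "orthogonal_matrix U" and "A = U ** diag_mat d ** transpose U"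
    and fA: "\<And>f. matfun f A = U ** diag_mat (\<chi> i. f (d$i)) ** transpose U"
    by (rule spectral_decomposition_matfun[OF assms]) blast
  show ?thesis by (simp add: fA oU conj_diag_mat_const)
qed

lemma matfun_add:
  assumes "symmetric_mat A"
  shows "matfun f A + matfun g A = matfun (\<lambda>x. f x + g x) A"
proof -
  obtain U d where "orthogonal_matrix U" "A = U ** diag_mat d ** transpose U"
    and fA: "\<And>f. matfun f A = U ** diag_mat (\<chi> i. f (d$i)) ** transpose U"
    by (rule spectral_decomposition_matfun[OF assms]) blast
  show ?thesis by (simp add: fA conj_diag_mat_add)
qed

lemma matfun_scaleR:
  assumes "symmetric_mat A"
  shows "c *\<^sub>R matfun f A = matfun (\<lambda>x. c * f x) A"
proof -
  obtain U d where "orthogonal_matrix U" "A = U ** diag_mat d ** transpose U"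
    and fA: "\<And>f. matfun f A = U ** diag_mat (\<chi> i. f (d$i)) ** transpose U"
    by (rule spectral_decomposition_matfun[OF assms]) blast
  show ?thesis by (simp add: fA conj_diag_mat_scaleR)
qed

lemma matfun_mult:
  assumes "symmetric_mat A"
  shows "matfun f A ** matfun g A = matfun (\<lambda>x. f x * g x) A"
proof -
  obtain U d where oU: "orthogonal_matrix U" and "A = U ** diag_mat d ** transpose U"
    and fA: "\<And>f. matfun f A = U ** diag_mat (\<chi> i. f (d$i)) ** transpose U"
    by (rule spectral_decomposition_matfun[OF assms]) blast
  show ?thesis by (simp add: fA oU conj_diag_mat_mult)
qed

lemma matfun_matfun:
  assumes "symmetric_mat A"
  shows "matfun g (matfun f A) = matfun (\<lambda>x. g (f x)) A"
proof -
  obtain U d where oU: "orthogonal_matrix U" and "A = U ** diag_mat d ** transpose U"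
    and fA: "\<And>f. matfun f A = U ** diag_mat (\<chi> i. f (d$i)) ** transpose U"
    by (rule spectral_decomposition_matfun[OF assms]) blast
  show ?thesis by (simp add: fA matfun_spectral[OF oU])
qed

lemma matfun_one_minus:
  assumes "symmetric_mat A"
  shows "mat 1 - A = matfun (\<lambda>x. 1 - x) A"
proof -
  obtain U d where oU: "orthogonal_matrix U" and A: "A = U ** diag_mat d ** transpose U"
    and fA: "\<And>f. matfun f A = U ** diag_mat (\<chi> i. f (d$i)) ** transpose U"
    by (rule spectral_decomposition_matfun[OF assms]) blast
  have "mat 1 - A = U ** diag_mat (\<chi> i. 1 - d$i) ** transpose U"
    using conj_diag_mat_diff[of U "\<chi> i. 1" d] by (simp add: A conj_diag_mat_const[OF oU])
  then show ?thesis by (simp only: fA)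
qed

lemma matrix_inv_matfun:
  assumes "symmetric_mat A" and "\<And>x. f x \<noteq> 0"
  shows "matrix_inv (matfun f A) = matfun (\<lambda>x. 1 / f x) A"
  by (rule matrix_inv_eqI) (simp_all add: assms matfun_mult matfun_const)

text \<open>In the basis change \<open>W = V\<^sup>T U\<close> the difference of two spectral representations has
  entries \<open>W$i$j * (a$j - b$i)\<close>.\<close>
lemma norm_squared_spectral_diff:
  fixes U V :: "real^'n::finite^'n"
  assumes oU: "orthogonal_matrix U" and oV: "orthogonal_matrix V"
  shows "(norm (U ** diag_mat a ** transpose U - V ** diag_mat b ** transpose V))^2
    = (\<Sum>i\<in>UNIV. \<Sum>j\<in>UNIV. ((transpose V ** U)$i$j)^2 * (a$j - b$i)^2)"
proof -
  define W where "W = transpose V ** U"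
  define D where "D = U ** diag_mat a ** transpose U - V ** diag_mat b ** transpose V"
  have "transpose V ** D ** U = W ** diag_mat a - diag_mat b ** W"
    using oU oV by (simp add: D_def W_def matrix_mul_diff_left matrix_mul_diff_right matrix_mul_assoc
        orthogonal_matrix_cancel_right orthogonal_matrix_def)
  then have "(norm D)^2 = (norm (W ** diag_mat a - diag_mat b ** W))^2"
    using norm_orthogonal_conj[OF oU oV, of D] by simp
  also have "\<dots> = (\<Sum>i\<in>UNIV. \<Sum>j\<in>UNIV. (W$i$j)^2 * (a$j - b$i)^2)"
    unfolding norm_squared_mat
    by (simp add: matrix_mul_diag_mat_nth diag_mat_mul_nth power_mult_distrib[symmetric] algebra_simps)
  finally show ?thesis by (simp add: D_def W_def)
qed

lemma matfun_lipschitz: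
  fixes A B :: "real^'n::finite^'n"
  assumes sA: "symmetric_mat A" and sB: "symmetric_mat B"
    and lip: "\<And>x y. \<bar>f x - f y\<bar> \<le> L * \<bar>x - y\<bar>"
  shows "norm (matfun f A - matfun f B) \<le> L * norm (A - B)"
proof -
  have "\<bar>f 1 - f 0\<bar> \<le> L" using lip[of 1 0] by simp
  then have L: "L \<ge> 0" using abs_ge_zero[of "f 1 - f 0"] by linarith
  obtain U a where oU: "orthogonal_matrix U" and A: "A = U ** diag_mat a ** transpose U"
    and fA: "\<And>f. matfun f A = U ** diag_mat (\<chi> i. f (a$i)) ** transpose U"
    by (rule spectral_decomposition_matfun[OF sA]) blast
  obtain V b where oV: "orthogonal_matrix V" and B: "B = V ** diag_mat b ** transpose V"
    and fB: "\<And>f. matfun f B = V ** diag_mat (\<chi> i. f (b$i)) ** transpose V"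
    by (rule spectral_decomposition_matfun[OF sB]) blast
  define W where "W = transpose V ** U"
  have "(norm (matfun f A - matfun f B))^2 = (\<Sum>i\<in>UNIV. \<Sum>j\<in>UNIV. (W$i$j)^2 * (f (a$j) - f (b$i))^2)"
    by (simp add: fA fB norm_squared_spectral_diff[OF oU oV] W_def)
  also have "\<dots> \<le> (\<Sum>i\<in>UNIV. \<Sum>j\<in>UNIV. (W$i$j)^2 * (L * (a$j - b$i))^2)"
    using lip L by (intro sum_mono mult_left_mono) (simp_all add: abs_le_square_iff[symmetric] abs_mult)
  also have "\<dots> = (L * norm (A - B))^2"
    by (simp add: A B norm_squared_spectral_diff[OF oU oV] W_def power_mult_distrib
        sum_distrib_left mult_ac)
  finally show ?thesis using L by (simp add: power2_le_iff_abs_le)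
qed

lemma trace_spectral_product:
  fixes U V :: "real^'n::finite^'n"
  assumes oV: "orthogonal_matrix V"
  shows "trace ((V ** diag_mat b ** transpose V) ** (U ** diag_mat a ** transpose U))
    = (\<Sum>i\<in>UNIV. \<Sum>j\<in>UNIV. ((transpose V ** U)$i$j)^2 * b$i * a$j)"
proof -
  define W where "W = transpose V ** U"
  have "(V ** diag_mat b ** transpose V) ** (U ** diag_mat a ** transpose U)
      = V ** (diag_mat b ** W ** diag_mat a ** transpose W) ** transpose V"
    using oV by (simp add: W_def matrix_transpose_mul matrix_mul_assoc orthogonal_matrix_cancel_right)
  then have "trace ((V ** diag_mat b ** transpose V) ** (U ** diag_mat a ** transpose U))
      = trace (diag_mat b ** W ** diag_mat a ** transpose W)"
    by (simp add: trace_orthogonal_conj[OF oV])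
  also have "\<dots> = (\<Sum>i\<in>UNIV. \<Sum>j\<in>UNIV. (W$i$j)^2 * b$i * a$j)"
  proof -
    have "(X ** transpose W) $ i $ i = (\<Sum>k\<in>UNIV. X$i$k * W$i$k)" for X :: "real^'n^'n" and i
      by (simp add: matrix_matrix_mult_def transpose_def)
    then show ?thesis
      by (simp add: trace_def matrix_mul_diag_mat_nth diag_mat_mul_nth power2_eq_square mult_ac)
  qed
  finally show ?thesis by (simp add: W_def)
qed

text \<open>In the basis change \<open>W = V\<^sup>T U\<close> every trace below becomes a sum over pairs of
  eigenvalues weighted by the doubly stochastic matrix \<open>(W$i$j)\<^sup>2\<close>.\<close>
lemma trace_klein_inequality:
  fixes A B U V :: "real^'n::finite^'n"
  assumes oU: "orthogonal_matrix U" and A: "A = U ** diag_mat a ** transpose U"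
    and oV: "orthogonal_matrix V" and B: "B = V ** diag_mat b ** transpose V"
    and tangent: "\<And>i j. g (b$i) + h (b$i) * (a$j - b$i) \<le> g (a$j)"
  shows "trace (matfun h B ** (A - B)) \<le> trace (matfun g A) - trace (matfun g B)"
proof -
  define w where "w i j = ((transpose V ** U)$i$j)^2" for i j
  note fA = matfun_spectral[OF oU A] and fB = matfun_spectral[OF oV B]
  note prod = trace_spectral_product[OF oV]
  have "trace (matfun g A) = trace ((V ** diag_mat (\<chi> i. 1) ** transpose V) ** matfun g A)"
    by (simp add: conj_diag_mat_const[OF oV])
  also have "\<dots> = (\<Sum>i\<in>UNIV. \<Sum>j\<in>UNIV. w i j * g (a$j))" by (simp add: fA prod w_def)
  finally have gA: "trace (matfun g A) = (\<Sum>i\<in>UNIV. \<Sum>j\<in>UNIV. w i j * g (a$j))" .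
  have "trace (matfun g B) = trace (matfun g B ** (U ** diag_mat (\<chi> i. 1) ** transpose U))"
    by (simp add: conj_diag_mat_const[OF oU])
  also have "\<dots> = (\<Sum>i\<in>UNIV. \<Sum>j\<in>UNIV. w i j * g (b$i))" by (simp add: fB prod w_def)
  finally have gB: "trace (matfun g B) = (\<Sum>i\<in>UNIV. \<Sum>j\<in>UNIV. w i j * g (b$i))" .
  have "matfun h B ** B = (V ** diag_mat (\<chi> i. h (b$i) * b$i) ** transpose V) **
      (U ** diag_mat (\<chi> i. 1) ** transpose U)"
    unfolding fB by (simp add: B conj_diag_mat_mult[OF oV] conj_diag_mat_const[OF oU])
  then have hB: "trace (matfun h B ** B) = (\<Sum>i\<in>UNIV. \<Sum>j\<in>UNIV. w i j * h (b$i) * b$i)"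
    by (simp add: prod w_def mult.assoc)
  have hA: "trace (matfun h B ** A) = (\<Sum>i\<in>UNIV. \<Sum>j\<in>UNIV. w i j * h (b$i) * a$j)"
    by (simp add: fB A prod w_def)
  have "trace (matfun g A) - trace (matfun g B) - trace (matfun h B ** (A - B))
      = (\<Sum>i\<in>UNIV. \<Sum>j\<in>UNIV. w i j * (g (a$j) - g (b$i) - h (b$i) * (a$j - b$i)))"
    by (simp add: gA gB hA hB matrix_mul_diff_left trace_sub sum_subtractf[symmetric] algebra_simps)
  also have "\<dots> \<ge> 0"
    using tangent by (intro sum_nonneg mult_nonneg_nonneg) (auto simp: w_def algebra_simps)
  finally show ?thesis by simp
qed

lemma psd_conj_diag_mat:
  fixes U :: "real^'n::finite^'n"
  assumes "\<And>i. 0 \<le> c$i"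
  shows "psd (U ** diag_mat c ** transpose U)"
  unfolding psd_def
  using assms by (simp add: symmetric_conj_diag_mat inner_orthogonal_conj inner_diag_mat sum_nonneg)

lemma feasible_spectral_iff:
  fixes U :: "real^'n::finite^'n"
  assumes oU: "orthogonal_matrix U"
  shows "feasible (U ** diag_mat d ** transpose U) \<longleftrightarrow> (\<forall>j. 0 \<le> d$j \<and> d$j \<le> 1)"
proof -
  have one_minus: "mat 1 - U ** diag_mat d ** transpose U = U ** diag_mat (\<chi> i. 1 - d$i) ** transpose U"
    using conj_diag_mat_diff[of U "\<chi> i. 1" d] by (simp add: conj_diag_mat_const[OF oU])
  have quad: "(U *v axis j 1) \<bullet> ((U ** diag_mat c ** transpose U) *v (U *v axis j 1)) = c$j" for c j
  proof -
    have "transpose U *v (U *v axis j 1) = axis j 1"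
      using oU by (simp add: matrix_vector_mul_assoc orthogonal_matrix_def)
    moreover have "c$i * (axis j (1::real) $ i)^2 = (if i = j then c$j else 0)" for i
      by (simp add: axis_def)
    ultimately show ?thesis by (simp add: inner_orthogonal_conj inner_diag_mat)
  qed
  show ?thesis
  proof
    assume "feasible (U ** diag_mat d ** transpose U)"
    then have "psd (U ** diag_mat d ** transpose U)" "psd (U ** diag_mat (\<chi> i. 1 - d$i) ** transpose U)"
      unfolding feasible_def loewner_le_def one_minus by simp_all
    then show "\<forall>j. 0 \<le> d$j \<and> d$j \<le> 1"
      unfolding psd_def using quad by (metis diff_ge_0_iff_ge vec_lambda_beta)
  next
    assume "\<forall>j. 0 \<le> d$j \<and> d$j \<le> 1"
    then show "feasible (U ** diag_mat d ** transpose U)"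
      unfolding feasible_def loewner_le_def one_minus
      by (auto simp: symmetric_conj_diag_mat intro!: psd_conj_diag_mat)
  qed
qed

lemma feasible_matfun:
  assumes "symmetric_mat A" and "\<And>x. 0 \<le> f x \<and> f x \<le> 1"
  shows "feasible (matfun f A)"
proof -
  obtain U d where oU: "orthogonal_matrix U" and "A = U ** diag_mat d ** transpose U"
    and fA: "\<And>f. matfun f A = U ** diag_mat (\<chi> i. f (d$i)) ** transpose U"
    by (rule spectral_decomposition_matfun[OF assms(1)]) blast
  show ?thesis using assms(2) by (simp add: fA feasible_spectral_iff[OF oU])
qed

section \<open>Binary entropy and the Fermi--Dirac function\<close>

definition binary_negentropy :: "real \<Rightarrow> real" where
  "binary_negentropy x = xlnx x + xlnx (1 - x)"

definition logit :: "real \<Rightarrow> real" where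
  "logit x = ln x - ln (1 - x)"

lemma xlnx_ge_tangent:
  assumes "0 \<le> x" and "0 < y"
  shows "x * ln y + x - y \<le> xlnx x"
proof (cases "x = 0")
  case False
  with assms have x: "x > 0" by simp
  have "ln (y / x) \<le> y / x - 1" using x assms(2) by (intro ln_le_minus_one) simp
  then have "x * ln (y / x) \<le> x * (y / x - 1)" using x by (simp add: mult_left_mono)
  then show ?thesis using x assms(2) by (simp add: xlnx_def ln_div right_diff_distrib)
qed (use assms in \<open>simp add: xlnx_def\<close>)

lemma binary_negentropy_ge_tangent:
  assumes "0 \<le> a" "a \<le> 1" and "0 < b" "b < 1"
  shows "binary_negentropy b + logit b * (a - b) \<le> binary_negentropy a"
proof -
  have "binary_negentropy b + logit b * (a - b) = a * ln b + (1 - a) * ln (1 - b)"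
    using assms by (simp add: binary_negentropy_def logit_def xlnx_def algebra_simps)
  also have "\<dots> \<le> binary_negentropy a"
    using xlnx_ge_tangent[of a b] xlnx_ge_tangent[of "1 - a" "1 - b"] assms
    by (simp add: binary_negentropy_def)
  finally show ?thesis .
qed

lemma trace_entropy_eq_matfun:
  assumes "symmetric_mat P"
  shows "trace (matfun xlnx P + matfun xlnx (mat 1 - P)) = trace (matfun binary_negentropy P)"
  by (simp add: assms matfun_one_minus matfun_matfun matfun_add binary_negentropy_def[abs_def])

definition fermi_dirac :: "real \<Rightarrow> real \<Rightarrow> real" where
  "fermi_dirac \<beta> y = 1 / (1 + exp (\<beta> * y))"

lemma fermi_dirac_bounds: "0 < fermi_dirac \<beta> y" "fermi_dirac \<beta> y < 1"
  unfolding fermi_dirac_def by (simp_all add: add_pos_pos)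

lemma fermi_dirac_lipschitz: "\<bar>fermi_dirac \<beta> x - fermi_dirac \<beta> y\<bar> \<le> \<bar>\<beta>\<bar> / 4 * \<bar>x - y\<bar>"
proof -
  have deriv: "(fermi_dirac \<beta> has_field_derivative
      - \<beta> * exp (\<beta> * z) / (1 + exp (\<beta> * z))^2) (at z within UNIV)" for z
  proof -
    have "1 + exp (\<beta> * z) \<noteq> 0" using exp_gt_zero[of "\<beta> * z"] by linarith
    then show ?thesis
      unfolding fermi_dirac_def
      by (auto intro!: derivative_eq_intros simp: power2_eq_square field_simps)
  qed
  have bound: "norm (- \<beta> * exp (\<beta> * z) / (1 + exp (\<beta> * z))^2) \<le> \<bar>\<beta>\<bar> / 4" for z
  proof -
    define e where "e = exp (\<beta> * z)"
    have "e > 0" by (simp add: e_def)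
    have "4 * e \<le> (1 + e)^2" using zero_le_power2[of "e - 1"] by (simp add: power2_eq_square algebra_simps)
    then have "\<bar>\<beta>\<bar> * (4 * e) \<le> \<bar>\<beta>\<bar> * (1 + e)^2" by (rule mult_left_mono) simp
    then have "\<bar>\<beta>\<bar> * e / (1 + e)^2 \<le> \<bar>\<beta>\<bar> / 4"
      using \<open>e > 0\<close> by (simp add: field_simps)
    then show ?thesis using \<open>e > 0\<close> by (simp add: e_def[symmetric] abs_mult)
  qed
  show ?thesis
    using field_differentiable_bound[OF convex_UNIV deriv bound] by simp
qed

lemma feasible_matfun_fermi_dirac: "symmetric_mat Y \<Longrightarrow> feasible (matfun (fermi_dirac \<beta>) Y)"
  by (rule feasible_matfun) (simp_all add: fermi_dirac_bounds less_imp_le)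

lemma logit_fermi_dirac: "logit (fermi_dirac \<beta> y) = - \<beta> * y"
proof -
  have pos: "1 + exp (\<beta> * y) > 0" by (simp add: add_pos_pos)
  then have "1 - fermi_dirac \<beta> y = exp (\<beta> * y) / (1 + exp (\<beta> * y))"
    by (simp add: fermi_dirac_def field_simps)
  then show ?thesis using pos by (simp add: logit_def fermi_dirac_def ln_div)
qed

lemma matrix_inv_one_plus_exp:
  assumes "symmetric_mat Y"
  shows "matrix_inv (mat 1 + matfun exp (\<beta> *\<^sub>R Y)) = matfun (fermi_dirac \<beta>) Y"
proof -
  have "\<beta> *\<^sub>R Y = matfun (\<lambda>x. \<beta> * x) Y"
    using matfun_scaleR[OF assms, of \<beta> "\<lambda>x. x"] by (simp add: matfun_ident[OF assms])
  then have "mat 1 + matfun exp (\<beta> *\<^sub>R Y) = matfun (\<lambda>_. 1) Y + matfun (\<lambda>x. exp (\<beta> * x)) Y"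
    by (simp add: assms matfun_matfun matfun_const)
  also have "\<dots> = matfun (\<lambda>x. 1 + exp (\<beta> * x)) Y" by (rule matfun_add[OF assms])
  finally have "mat 1 + matfun exp (\<beta> *\<^sub>R Y) = matfun (\<lambda>x. 1 + exp (\<beta> * x)) Y" .
  moreover have "1 + exp (\<beta> * x) \<noteq> 0" for x using exp_gt_zero[of "\<beta> * x"] by linarith
  ultimately show ?thesis
    by (simp add: assms matrix_inv_matfun fermi_dirac_def[abs_def])
qed

lemma fermi_dirac_klein:
  fixes Y P :: "real^'n::finite^'n"
  assumes symY: "symmetric_mat Y" and P: "feasible P"
  shows "\<beta> * trace (Y ** (matfun (fermi_dirac \<beta>) Y - P))
    \<le> trace (matfun binary_negentropy P) - trace (matfun binary_negentropy (matfun (fermi_dirac \<beta>) Y))"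
proof -
  obtain V y where oV: "orthogonal_matrix V" and Y: "Y = V ** diag_mat y ** transpose V"
    and fY: "\<And>f. matfun f Y = V ** diag_mat (\<chi> i. f (y$i)) ** transpose V"
    by (rule spectral_decomposition_matfun[OF symY]) blast
  obtain U d where oU: "orthogonal_matrix U" and Pd: "P = U ** diag_mat d ** transpose U"
    using spectral_decomposition P unfolding feasible_def by blast
  have d: "0 \<le> d$j" "d$j \<le> 1" for j using P feasible_spectral_iff[OF oU] by (simp_all add: Pd)
  define P0 where "P0 = matfun (fermi_dirac \<beta>) Y"
  have P0: "P0 = V ** diag_mat (\<chi> i. fermi_dirac \<beta> (y$i)) ** transpose V" by (simp add: P0_def fY)
  have "matfun logit P0 = (- \<beta>) *\<^sub>R Y"
    by (simp add: matfun_spectral[OF oV P0] logit_fermi_dirac Y conj_diag_mat_scaleR)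
  then have logit: "trace (matfun logit P0 ** M) = - \<beta> * trace (Y ** M)" for M
    by (simp add: scalar_matrix_assoc[symmetric] trace_scaleR del: scaleR_minus_left)
  have "trace (matfun logit P0 ** (P - P0))
      \<le> trace (matfun binary_negentropy P) - trace (matfun binary_negentropy P0)"
    using oU Pd oV P0 d fermi_dirac_bounds
    by (intro trace_klein_inequality binary_negentropy_ge_tangent) auto
  then show ?thesis
    by (simp add: logit P0_def[symmetric] matrix_mul_diff_left trace_sub algebra_simps)
qed

section \<open>The objective and the iteration\<close>

definition smooth_part ::
  "'n::finite sqmat \<Rightarrow> 'n sqmat \<Rightarrow> 'n sqmat \<Rightarrow> 'n sqmat \<Rightarrow> 'n sqmat \<Rightarrow> real \<Rightarrow> real \<Rightarrow> 'n sqmat \<Rightarrow> real"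
  where "smooth_part H Q R B D lam r P =
    trace (H ** P) + (lam / 2) * (norm (P - Q + B))^2 + (r / 2) * (norm (P - R + D))^2"

definition smooth_grad ::
  "'n::finite sqmat \<Rightarrow> 'n sqmat \<Rightarrow> 'n sqmat \<Rightarrow> 'n sqmat \<Rightarrow> 'n sqmat \<Rightarrow> real \<Rightarrow> real \<Rightarrow> 'n sqmat \<Rightarrow> 'n sqmat"
  where "smooth_grad H Q R B D lam r X = H + lam *\<^sub>R (X - Q + B) + r *\<^sub>R (X - R + D)"

lemma objective_eq_smooth_part:
  "symmetric_mat P \<Longrightarrow> objective H Q R B D \<beta> lam r P
    = smooth_part H Q R B D lam r P + (1 / \<beta>) * trace (matfun binary_negentropy P)"
  by (simp add: objective_def smooth_part_def frob_norm_eq_norm trace_entropy_eq_matfun)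

lemma symmetric_smooth_grad:
  "symmetric_mat H \<Longrightarrow> symmetric_mat Q \<Longrightarrow> symmetric_mat R \<Longrightarrow> symmetric_mat B \<Longrightarrow> symmetric_mat D
    \<Longrightarrow> symmetric_mat X \<Longrightarrow> symmetric_mat (smooth_grad H Q R B D lam r X)"
  unfolding smooth_grad_def by (intro symmetric_mat_add symmetric_mat_diff symmetric_mat_scaleR)

lemma smooth_grad_diff:
  "smooth_grad H Q R B D lam r X - smooth_grad H Q R B D lam r X' = (lam + r) *\<^sub>R (X - X')"
  unfolding smooth_grad_def by (simp add: algebra_simps)

lemma smooth_part_ge_tangent:
  fixes H Q R B D P P0 :: "real^'n::finite^'n"
  assumes "symmetric_mat Q" "symmetric_mat R" "symmetric_mat B" "symmetric_mat D" "symmetric_mat P0"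
    and "lam \<ge> 0" "r \<ge> 0"
  shows "smooth_part H Q R B D lam r P0 + trace (smooth_grad H Q R B D lam r P0 ** (P - P0))
    \<le> smooth_part H Q R B D lam r P"
proof -
  define X where "X = P - P0"
  have quad: "(l / 2) * (norm C)^2 + l * trace (C ** X) \<le> (l / 2) * (norm (X + C))^2"
    if "symmetric_mat C" "l \<ge> 0" for C and l :: real
    using mult_left_mono[OF norm_squared_ge_tangent[of C X] \<open>l \<ge> 0\<close>] that
    by (simp add: inner_eq_trace symmetric_mat_def algebra_simps)
  have grad: "trace (smooth_grad H Q R B D lam r P0 ** X)
      = trace (H ** X) + lam * trace ((P0 - Q + B) ** X) + r * trace ((P0 - R + D) ** X)"
    by (simp add: smooth_grad_def matrix_add_rdistrib trace_add trace_scaleR scalar_matrix_assoc[symmetric])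
  have lin: "trace (H ** P) = trace (H ** P0) + trace (H ** X)"
    by (simp add: X_def matrix_mul_diff_left trace_sub)
  have e1: "P - Q + B = X + (P0 - Q + B)" by (simp add: X_def)
  have q1: "(lam / 2) * (norm (P0 - Q + B))^2 + lam * trace ((P0 - Q + B) ** X)
      \<le> (lam / 2) * (norm (P - Q + B))^2"
    unfolding e1 by (rule quad) (use assms in \<open>simp_all add: symmetric_mat_add symmetric_mat_diff\<close>)
  have e2: "P - R + D = X + (P0 - R + D)" by (simp add: X_def)
  have q2: "(r / 2) * (norm (P0 - R + D))^2 + r * trace ((P0 - R + D) ** X)
      \<le> (r / 2) * (norm (P - R + D))^2"
    unfolding e2 by (rule quad) (use assms in \<open>simp_all add: symmetric_mat_add symmetric_mat_diff\<close>)
  show ?thesis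
    unfolding smooth_part_def X_def[symmetric] using grad lin q1 q2 by linarith
qed

lemma fermi_dirac_fixed_point_minimizes:
  fixes H Q R B D P P0 :: "real^'n::finite^'n"
  assumes "symmetric_mat H" "symmetric_mat Q" "symmetric_mat R" "symmetric_mat B" "symmetric_mat D"
    and "\<beta> > 0" "lam \<ge> 0" "r \<ge> 0"
    and sym_P0: "symmetric_mat P0" and fixed: "P0 = matfun (fermi_dirac \<beta>) (smooth_grad H Q R B D lam r P0)"
    and P: "feasible P"
  shows "objective H Q R B D \<beta> lam r P0 \<le> objective H Q R B D \<beta> lam r P"
proof -
  define Y0 where "Y0 = smooth_grad H Q R B D lam r P0"
  have "symmetric_mat Y0" unfolding Y0_def using assms by (intro symmetric_smooth_grad)
  from fermi_dirac_klein[OF this P, of \<beta>]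
  have "0 \<le> trace (Y0 ** (P - P0))
      + (1 / \<beta>) * (trace (matfun binary_negentropy P) - trace (matfun binary_negentropy P0))"
    using \<open>\<beta> > 0\<close> fixed
    by (simp add: matrix_mul_diff_left trace_sub field_simps flip: Y0_def)
  moreover have "smooth_part H Q R B D lam r P0 + trace (Y0 ** (P - P0)) \<le> smooth_part H Q R B D lam r P"
    unfolding Y0_def using assms by (intro smooth_part_ge_tangent)
  moreover have "symmetric_mat P" using P by (simp add: feasible_def)
  ultimately show ?thesis using sym_P0 by (simp add: objective_eq_smooth_part algebra_simps)
qed

lemma fermi_dirac_map_contraction:
  fixes X X' :: "real^'n::finite^'n"
  assumes "symmetric_mat H" "symmetric_mat Q" "symmetric_mat R" "symmetric_mat B" "symmetric_mat D"
    and "symmetric_mat X" "symmetric_mat X'" and "\<beta> > 0" "lam \<ge> 0" "r \<ge> 0"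
  shows "norm (matfun (fermi_dirac \<beta>) (smooth_grad H Q R B D lam r X)
      - matfun (fermi_dirac \<beta>) (smooth_grad H Q R B D lam r X'))
    \<le> \<beta> * (lam + r) / 4 * norm (X - X')"
proof -
  have "norm (matfun (fermi_dirac \<beta>) (smooth_grad H Q R B D lam r X)
      - matfun (fermi_dirac \<beta>) (smooth_grad H Q R B D lam r X'))
    \<le> \<bar>\<beta>\<bar> / 4 * norm (smooth_grad H Q R B D lam r X - smooth_grad H Q R B D lam r X')"
    using assms by (intro matfun_lipschitz symmetric_smooth_grad fermi_dirac_lipschitz)
  then show ?thesis using assms by (simp add: smooth_grad_diff)
qed

lemma fermi_dirac_fixed_point_exists:
  fixes H Q R B D :: "real^'n::finite^'n"
  assumes "symmetric_mat H" "symmetric_mat Q" "symmetric_mat R" "symmetric_mat B" "symmetric_mat D"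
    and "\<beta> > 0" "lam \<ge> 0" "r \<ge> 0" "\<beta> * (lam + r) < 4"
  obtains P0 where "symmetric_mat P0" "P0 = matfun (fermi_dirac \<beta>) (smooth_grad H Q R B D lam r P0)"
proof -
  define F where "F X = matfun (fermi_dirac \<beta>) (smooth_grad H Q R B D lam r X)" for X
  have "\<exists>!P0\<in>{A. symmetric_mat A}. F P0 = P0"
  proof (rule Banach_fix[OF complete_symmetric_mat])
    show "F ` {A. symmetric_mat A} \<subseteq> {A. symmetric_mat A}"
      using assms by (auto simp: F_def intro!: symmetric_matfun symmetric_smooth_grad)
    show "dist (F X) (F X') \<le> \<beta> * (lam + r) / 4 * dist X X'"
      if "X \<in> {A. symmetric_mat A}" "X' \<in> {A. symmetric_mat A}" for X X'
      using that assms unfolding F_def dist_norm by (intro fermi_dirac_map_contraction) auto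
  qed (use assms in \<open>auto intro: exI[of _ 0] simp: symmetric_mat_def\<close>)
  then obtain P0 where "symmetric_mat P0" "F P0 = P0" by blast
  then show ?thesis using that by (simp add: F_def)
qed

lemma geometric_decay:
  fixes a :: "nat \<Rightarrow> real"
  assumes step: "\<And>l. a (Suc l) \<le> k * a l" and "k \<ge> 0"
  shows "a l \<le> k ^ l * a 0"
proof (induction l)
  case (Suc l)
  have "a (Suc l) \<le> k * a l" by (rule step)
  also have "\<dots> \<le> k * (k ^ l * a 0)" using Suc \<open>k \<ge> 0\<close> by (rule mult_left_mono)
  finally show ?case by (simp add: mult.assoc)
qed simp

theorem proposition3:
  fixes H Q R B D Zstar :: "real^'n::finite^'n"
    and Z Y :: "nat \<Rightarrow> real^'n^'n"
    and \<beta> lam r :: real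
  assumes symH: "symmetric_mat H" and symQ: "symmetric_mat Q" and symR: "symmetric_mat R"
    and symB: "symmetric_mat B" and symD: "symmetric_mat D"
    and \<beta>_pos: "\<beta> > 0" and lam_pos: "lam > 0" and r_pos: "r > 0"
    and contr: "\<beta> * (lam + r) < 4"
    and Zstar_feas: "feasible Zstar"
    and Zstar_min: "\<And>P. feasible P \<Longrightarrow>
                      objective H Q R B D \<beta> lam r Zstar \<le> objective H Q R B D \<beta> lam r P"
    and Zstar_unique: "\<And>P. feasible P \<Longrightarrow>
                      objective H Q R B D \<beta> lam r P \<le> objective H Q R B D \<beta> lam r Zstar \<Longrightarrow> P = Zstar"
    and symZ0: "symmetric_mat (Z 0)"
    and Y_def: "\<And>l. Y l = H + lam *\<^sub>R (Z l - Q + B) + r *\<^sub>R (Z l - R + D)"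
    and Z_step: "\<And>l. Z (Suc l) = matrix_inv (mat 1 + matfun exp (\<beta> *\<^sub>R Y l))"
  shows "\<forall>l. frob_norm (Z l - Zstar) \<le> (\<beta> * (lam + r) / 4) ^ l * frob_norm (Z 0 - Zstar)"
proof -
  note sym_data = symH symQ symR symB symD
  let ?G = "smooth_grad H Q R B D lam r"
  obtain P0 where sym_P0: "symmetric_mat P0" and P0: "P0 = matfun (fermi_dirac \<beta>) (?G P0)"
    using fermi_dirac_fixed_point_exists[OF sym_data \<beta>_pos _ _ contr] lam_pos r_pos by auto
  have "feasible (matfun (fermi_dirac \<beta>) (?G P0))"
    by (intro feasible_matfun_fermi_dirac symmetric_smooth_grad sym_data sym_P0)
  then have "feasible P0" by (simp only: P0[symmetric])
  moreover have "objective H Q R B D \<beta> lam r P0 \<le> objective H Q R B D \<beta> lam r Zstar"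
    using sym_data \<beta>_pos lam_pos r_pos sym_P0 P0 Zstar_feas
    by (intro fermi_dirac_fixed_point_minimizes) auto
  ultimately have Zstar: "Zstar = P0" by (metis Zstar_unique)
  have Z_Suc: "Z (Suc l) = matfun (fermi_dirac \<beta>) (?G (Z l))" if "symmetric_mat (Z l)" for l
    using Z_step Y_def matrix_inv_one_plus_exp[OF symmetric_smooth_grad[OF sym_data that]]
    by (simp add: smooth_grad_def)
  have symZ: "symmetric_mat (Z l)" for l
    by (induction l) (simp_all add: symZ0 Z_Suc symmetric_matfun symmetric_smooth_grad sym_data)
  have "frob_norm (Z (Suc l) - Zstar) \<le> \<beta> * (lam + r) / 4 * frob_norm (Z l - Zstar)" for l
    unfolding frob_norm_eq_norm Z_Suc[OF symZ] Zstar
    by (subst P0, rule fermi_dirac_map_contraction) (use sym_data symZ sym_P0 \<beta>_pos lam_pos r_pos in auto)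
  then show ?thesis
    using \<beta>_pos lam_pos r_pos by (intro allI geometric_decay) auto
qed

end
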